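(* Let $x\in X$ with ${\cal E}_J(x)=\emptyset$. Then for every sequence $(x^{(k)})_{k\in\mathbb N}$ in $X$ converging to $x$ and every $i\in I$, $\rho_i(x^{(k)})\to\rho_i(x)$ (where, if $\rho_i(x)=-\infty$, this means $\rho_i(x^{(k)})=-\infty$ for all sufficiently large $k$). Equivalently, if $\rho=(\rho_i)_{i\in I}$ restricted to $X$ is not continuous at $x\in X$, then ${\cal E}_J(x)\ne\emptyset$.
   Context: $I$ is a finite set of players, $A_i$ finite nonempty action sets, $A=\prod_iA_i$, $r_i:A\to(0,1]$, $p:A\to[0,1]$. Let $\Xi=\prod_i\Delta(A_i)$; for $x\in\Xi$, $p(x)=\sum_ap(a)\prod_jx_j(a_j)$ and, if $p(x)>0$, $r_i(x)=\sum_ar_i(a)p(a)\prod_jx_j(a_j)/p(x)$ (also applied to partially pure profiles). $X:=\{x\in\Xi:p(x)=0\}$ is the set of nonabsorbing mixed action profiles. $\rho_i(x):=\max\{r_i(a_i,x_{-i}):a_i\in A_i,\ p(a_i,x_{-i})>0\}$, with $\max\emptyset=-\infty$ (so $\rho_i$ takes values in $\{-\infty\}\cup(0,1]$). For $x\in X$, a pair $(J,a_J)$ with $\emptyset\ne J\subseteq I$, $a_J\in\prod_{i\in J}A_i$ is an exit at $x$ if $p(a_J,x_{-J})>0$ and $p(a_{J'},x_{-J'})=0$ for every proper subset $J'\subsetneq J$; it is a joint exit if $|J|\ge2$; ${\cal E}_J(x)$ is the set of joint exits at $x$. *)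

theory Defs
  imports "HOL-Analysis.Analysis"
begin

definition mixed_profiles :: "'i set \<Rightarrow> ('i \<Rightarrow> 'a set) \<Rightarrow> ('i \<Rightarrow> 'a \<Rightarrow> real) set" where
  "mixed_profiles I A = {x. \<forall>i\<in>I. (\<forall>b\<in>A i. 0 \<le> x i b) \<and> (\<Sum>b\<in>A i. x i b) = 1}"

definition pure_upd :: "('i \<Rightarrow> 'a \<Rightarrow> real) \<Rightarrow> 'i set \<Rightarrow> ('i \<Rightarrow> 'a) \<Rightarrow> ('i \<Rightarrow> 'a \<Rightarrow> real)" where
  "pure_upd x J aJ = (\<lambda>j. if j \<in> J then (\<lambda>b. if b = aJ j then 1 else 0) else x j)"

definition pval :: "'i set \<Rightarrow> ('i \<Rightarrow> 'a set) \<Rightarrow> (('i \<Rightarrow> 'a) \<Rightarrow> real) \<Rightarrow> ('i \<Rightarrow> 'a \<Rightarrow> real) \<Rightarrow> real" where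
  "pval I A p x = (\<Sum>a\<in>PiE I A. p a * (\<Prod>j\<in>I. x j (a j)))"

text \<open>r_i(x), meaningful when p(x) > 0.\<close>
definition rval :: "'i set \<Rightarrow> ('i \<Rightarrow> 'a set) \<Rightarrow> (('i \<Rightarrow> 'a) \<Rightarrow> real) \<Rightarrow> ('i \<Rightarrow> ('i \<Rightarrow> 'a) \<Rightarrow> real)
     \<Rightarrow> 'i \<Rightarrow> ('i \<Rightarrow> 'a \<Rightarrow> real) \<Rightarrow> real" where
  "rval I A p r i x = (\<Sum>a\<in>PiE I A. r i a * p a * (\<Prod>j\<in>I. x j (a j))) / pval I A p x"

definition nonabs :: "'i set \<Rightarrow> ('i \<Rightarrow> 'a set) \<Rightarrow> (('i \<Rightarrow> 'a) \<Rightarrow> real) \<Rightarrow> ('i \<Rightarrow> 'a \<Rightarrow> real) set" where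
  "nonabs I A p = {x \<in> mixed_profiles I A. pval I A p x = 0}"

text \<open>rho_i(x) = max { r_i(a_i, x_{-i}) : a_i in A_i, p(a_i, x_{-i}) > 0 }, with max of the
empty set = -infinity (the supremum in ereal of a finite set is its maximum, and Sup {} = -\<infinity>).\<close>
definition rho :: "'i set \<Rightarrow> ('i \<Rightarrow> 'a set) \<Rightarrow> (('i \<Rightarrow> 'a) \<Rightarrow> real) \<Rightarrow> ('i \<Rightarrow> ('i \<Rightarrow> 'a) \<Rightarrow> real)
     \<Rightarrow> 'i \<Rightarrow> ('i \<Rightarrow> 'a \<Rightarrow> real) \<Rightarrow> ereal" where
  "rho I A p r i x =
     (SUP b \<in> {b \<in> A i. pval I A p (pure_upd x {i} (\<lambda>_. b)) > 0}.
        ereal (rval I A p r i (pure_upd x {i} (\<lambda>_. b))))"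

definition is_exit :: "'i set \<Rightarrow> ('i \<Rightarrow> 'a set) \<Rightarrow> (('i \<Rightarrow> 'a) \<Rightarrow> real) \<Rightarrow> ('i \<Rightarrow> 'a \<Rightarrow> real)
     \<Rightarrow> 'i set \<Rightarrow> ('i \<Rightarrow> 'a) \<Rightarrow> bool" where
  "is_exit I A p x J aJ \<longleftrightarrow> J \<noteq> {} \<and> J \<subseteq> I \<and> aJ \<in> PiE J A \<and>
     pval I A p (pure_upd x J aJ) > 0 \<and>
     (\<forall>J'. J' \<subset> J \<longrightarrow> pval I A p (pure_upd x J' aJ) = 0)"

definition joint_exits :: "'i set \<Rightarrow> ('i \<Rightarrow> 'a set) \<Rightarrow> (('i \<Rightarrow> 'a) \<Rightarrow> real) \<Rightarrow> ('i \<Rightarrow> 'a \<Rightarrow> real)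
     \<Rightarrow> ('i set \<times> ('i \<Rightarrow> 'a)) set" where
  "joint_exits I A p x = {(J, aJ). is_exit I A p x J aJ \<and> card J \<ge> 2}"

end

theory Submission
  imports Defs
begin

(* Write B(y) = exit_actions I A p i y for the actions b of player i with p(b, y_{-i}) > 0, so
   that rho_i(y) is the maximum of r_i(b, y_{-i}) over B(y). On the fixed set B(x) these payoffs
   converge, so it suffices that B(x^k) = B(x) for large k. Positivity of p is an open condition,
   whence B(x) is eventually contained in B(x^k), and likewise for the unilateral exits of every
   other player. Conversely, let b be in B(x^k), witnessed by a pure profile a with p(a) > 0,
   a_i = b and x^k_j(a_j) > 0 for j /= i. Replacing x by a on i and on the players with
   x_j(a_j) = 0 gives a positive p; a minimal such set of players is an exit at x, hence a single
   player j since there are no joint exits. For j = i this says b is in B(x); for j /= i the exit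
   (j, a_j) persists at x^k, and together with x^k_j(a_j) > 0 it would make x^k absorbing. *)

definition exit_actions ::
    "'i set \<Rightarrow> ('i \<Rightarrow> 'a set) \<Rightarrow> (('i \<Rightarrow> 'a) \<Rightarrow> real) \<Rightarrow> 'i \<Rightarrow> ('i \<Rightarrow> 'a \<Rightarrow> real) \<Rightarrow> 'a set" where
  "exit_actions I A p i y = {b \<in> A i. 0 < pval I A p (pure_upd y {i} (\<lambda>_. b))}"

lemma rho_eq_SUP_exit_actions:
  "rho I A p r i y =
     (SUP b \<in> exit_actions I A p i y. ereal (rval I A p r i (pure_upd y {i} (\<lambda>_. b))))"
  by (simp add: rho_def exit_actions_def)

lemma rho_eq_MInfty_iff: "rho I A p r i y = -\<infinity> \<longleftrightarrow> exit_actions I A p i y = {}"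
  unfolding rho_eq_SUP_exit_actions bot_ereal_def[symmetric] SUP_bot_conv
  by (auto simp: bot_ereal_def)

lemma nonabs_nonneg: "y \<in> nonabs I A p \<Longrightarrow> j \<in> I \<Longrightarrow> c \<in> A j \<Longrightarrow> 0 \<le> y j c"
  by (simp add: nonabs_def mixed_profiles_def)

lemma pval_pure_upd_tendsto:
  assumes "\<And>j c. j \<in> I \<Longrightarrow> c \<in> A j \<Longrightarrow> ((\<lambda>k. xs k j c) \<longlongrightarrow> x j c) F"
  shows "((\<lambda>k. pval I A q (pure_upd (xs k) J aJ)) \<longlongrightarrow> pval I A q (pure_upd x J aJ)) F"
  unfolding pval_def
proof (intro tendsto_sum tendsto_mult tendsto_const tendsto_prod)
  fix a j assume "a \<in> PiE I A" "j \<in> I"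
  then show "((\<lambda>k. pure_upd (xs k) J aJ j (a j)) \<longlongrightarrow> pure_upd x J aJ j (a j)) F"
    using assms by (auto simp: pure_upd_def)
qed

lemma eventually_pval_pure_upd_pos:
  assumes "\<And>j c. j \<in> I \<Longrightarrow> c \<in> A j \<Longrightarrow> ((\<lambda>k. xs k j c) \<longlongrightarrow> x j c) F"
    and "0 < pval I A q (pure_upd x J aJ)"
  shows "\<forall>\<^sub>F k in F. 0 < pval I A q (pure_upd (xs k) J aJ)"
proof -
  have "((\<lambda>k. pval I A q (pure_upd (xs k) J aJ)) \<longlongrightarrow> pval I A q (pure_upd x J aJ)) F"
    using assms(1) by (rule pval_pure_upd_tendsto)
  from this assms(2) show ?thesis
    by (rule order_tendstoD(1))
qed

lemma rval_pure_upd_tendsto: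
  assumes "\<And>j c. j \<in> I \<Longrightarrow> c \<in> A j \<Longrightarrow> ((\<lambda>k. xs k j c) \<longlongrightarrow> x j c) F"
    and "0 < pval I A p (pure_upd x J aJ)"
  shows "((\<lambda>k. rval I A p r i (pure_upd (xs k) J aJ)) \<longlongrightarrow> rval I A p r i (pure_upd x J aJ)) F"
proof -
  have "rval I A p r i y = pval I A (\<lambda>a. r i a * p a) y / pval I A p y" for y
    by (simp add: rval_def pval_def mult.assoc)
  then show ?thesis
    using assms by (simp only:) (intro tendsto_divide pval_pure_upd_tendsto, auto)
qed

lemma tendsto_SUP_finite:
  fixes g :: "'b \<Rightarrow> 'c \<Rightarrow> 'd::{complete_linorder, linorder_topology}"
  assumes "finite S" and "\<And>b. b \<in> S \<Longrightarrow> ((\<lambda>k. g k b) \<longlongrightarrow> h b) F"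
  shows "((\<lambda>k. SUP b\<in>S. g k b) \<longlongrightarrow> (SUP b\<in>S. h b)) F"
  using assms by (induction S rule: finite_induct) (auto simp: sup_max intro: tendsto_max)

locale finite_game =
  fixes I :: "'i set" and A :: "'i \<Rightarrow> 'a set" and p :: "('i \<Rightarrow> 'a) \<Rightarrow> real"
  assumes finite_players: "finite I"
    and finite_actions: "\<And>i. i \<in> I \<Longrightarrow> finite (A i)"
    and p_nonneg: "\<And>a. a \<in> PiE I A \<Longrightarrow> 0 \<le> p a"
begin

lemma pval_nonneg:
  assumes "\<And>j c. j \<in> I \<Longrightarrow> c \<in> A j \<Longrightarrow> 0 \<le> y j c"
  shows "0 \<le> pval I A p y"
  unfolding pval_def using assms p_nonneg by (intro sum_nonneg mult_nonneg_nonneg prod_nonneg) auto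

lemma pval_pos_iff:
  assumes y_nonneg: "\<And>j c. j \<in> I \<Longrightarrow> c \<in> A j \<Longrightarrow> 0 \<le> y j c"
  shows "0 < pval I A p y \<longleftrightarrow> (\<exists>a \<in> PiE I A. 0 < p a \<and> (\<forall>j \<in> I. 0 < y j (a j)))"
proof
  assume "0 < pval I A p y"
  then have "pval I A p y \<noteq> 0" by simp
  then obtain a where a: "a \<in> PiE I A" and "p a * (\<Prod>j\<in>I. y j (a j)) \<noteq> 0"
    unfolding pval_def by (rule sum.not_neutral_contains_not_neutral)
  then have "p a \<noteq> 0" and "\<forall>j \<in> I. y j (a j) \<noteq> 0"
    using finite_players by auto
  moreover have "0 \<le> p a" and "\<forall>j \<in> I. 0 \<le> y j (a j)"
    using a p_nonneg y_nonneg by (blast intro: PiE_mem)+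
  ultimately show "\<exists>a \<in> PiE I A. 0 < p a \<and> (\<forall>j \<in> I. 0 < y j (a j))"
    using a by (metis order_less_le)
next
  assume "\<exists>a \<in> PiE I A. 0 < p a \<and> (\<forall>j \<in> I. 0 < y j (a j))"
  then obtain a where a: "a \<in> PiE I A" "0 < p a" "\<forall>j \<in> I. 0 < y j (a j)" by blast
  have "finite (PiE I A)"
    using finite_players finite_actions by (rule finite_PiE)
  moreover note \<open>a \<in> PiE I A\<close>
  moreover have "0 < p a * (\<Prod>j\<in>I. y j (a j))"
    using a by (simp add: prod_pos)
  moreover have "0 \<le> p b * (\<Prod>j\<in>I. y j (b j))" if "b \<in> PiE I A" for b
    using that p_nonneg y_nonneg by (simp add: PiE_mem prod_nonneg)
  ultimately show "0 < pval I A p y"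
    unfolding pval_def by (rule sum_pos2[where f = "\<lambda>b. p b * (\<Prod>j\<in>I. y j (b j))"])
qed

lemma pval_pure_upd_pos_iff:
  assumes "\<And>j c. j \<in> I \<Longrightarrow> c \<in> A j \<Longrightarrow> 0 \<le> y j c"
  shows "0 < pval I A p (pure_upd y J aJ) \<longleftrightarrow>
    (\<exists>a \<in> PiE I A. 0 < p a \<and> (\<forall>j \<in> I. if j \<in> J then a j = aJ j else 0 < y j (a j)))"
proof -
  have pos_iff: "0 < pure_upd y J aJ j c \<longleftrightarrow> (if j \<in> J then c = aJ j else 0 < y j c)" for j c
    by (simp add: pure_upd_def)
  have "0 \<le> pure_upd y J aJ j c" if "j \<in> I" "c \<in> A j" for j c
    using assms that by (simp add: pure_upd_def)
  then show ?thesis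
    by (simp only: pval_pos_iff pos_iff)
qed

lemma pval_pos_of_pure_upd_pos:
  assumes y_nonneg: "\<And>j c. j \<in> I \<Longrightarrow> c \<in> A j \<Longrightarrow> 0 \<le> y j c"
    and "0 < pval I A p (pure_upd y {l} (\<lambda>_. d))" and "0 < y l d"
  shows "0 < pval I A p y"
proof -
  have "\<exists>a \<in> PiE I A. 0 < p a \<and> (\<forall>j \<in> I. if j \<in> {l} then a j = d else 0 < y j (a j))"
    using y_nonneg assms(2) by (rule pval_pure_upd_pos_iff[THEN iffD1])
  then have "\<exists>a \<in> PiE I A. 0 < p a \<and> (\<forall>j \<in> I. 0 < y j (a j))"
    using \<open>0 < y l d\<close> by (metis singletonD)
  with y_nonneg show ?thesis
    by (rule pval_pos_iff[THEN iffD2])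
qed

lemma exists_exit_below:
  assumes x_nonneg: "\<And>j c. j \<in> I \<Longrightarrow> c \<in> A j \<Longrightarrow> 0 \<le> x j c" and "pval I A p x = 0"
    and "J \<subseteq> I" and "a \<in> PiE I A" and "0 < pval I A p (pure_upd x J a)"
  obtains J0 where "J0 \<subseteq> J" and "is_exit I A p x J0 (restrict a J0)"
proof -
  have restrict_eq: "pure_upd x J' (restrict a J0) = pure_upd x J' a" if "J' \<subseteq> J0" for J' J0
    using that by (auto simp: pure_upd_def fun_eq_iff)
  obtain J0 where J0: "J0 \<subseteq> J" "0 < pval I A p (pure_upd x J0 a)"
    and least: "\<And>J'. J' \<subseteq> J \<Longrightarrow> 0 < pval I A p (pure_upd x J' a) \<Longrightarrow> card J0 \<le> card J'"
    using ex_has_least_nat[of "\<lambda>J'. J' \<subseteq> J \<and> 0 < pval I A p (pure_upd x J' a)" J card] assms(5)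
    by blast
  have "finite J0"
    using J0(1) \<open>J \<subseteq> I\<close> by (blast intro: finite_subset[OF _ finite_players])
  have "pure_upd x {} a = x"
    by (simp add: pure_upd_def)
  then have "J0 \<noteq> {}"
    using J0(2) \<open>pval I A p x = 0\<close> by auto
  have "pval I A p (pure_upd x J' a) = 0" if "J' \<subset> J0" for J'
  proof -
    have "J' \<subseteq> J" and "card J' < card J0"
      using that J0(1) psubset_card_mono[OF \<open>finite J0\<close>] by auto
    then have "\<not> 0 < pval I A p (pure_upd x J' a)"
      using least by (meson not_le)
    moreover have "0 \<le> pval I A p (pure_upd x J' a)"
      using x_nonneg by (intro pval_nonneg) (auto simp: pure_upd_def)
    ultimately show ?thesis by simp
  qed
  then have "is_exit I A p x J0 (restrict a J0)"
    unfolding is_exit_def using J0 \<open>J0 \<noteq> {}\<close> \<open>J \<subseteq> I\<close> \<open>a \<in> PiE I A\<close> restrict_eq by auto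
  with J0(1) show ?thesis by (rule that)
qed

lemma exists_unilateral_exit_below:
  assumes "\<And>j c. j \<in> I \<Longrightarrow> c \<in> A j \<Longrightarrow> 0 \<le> x j c" and "pval I A p x = 0"
    and "joint_exits I A p x = {}"
    and "J \<subseteq> I" and "a \<in> PiE I A" and "0 < pval I A p (pure_upd x J a)"
  obtains j where "j \<in> J" and "0 < pval I A p (pure_upd x {j} (\<lambda>_. a j))"
proof -
  obtain J0 where "J0 \<subseteq> J" and exit: "is_exit I A p x J0 (restrict a J0)"
    using assms(1,2,4-6) by (rule exists_exit_below)
  have "finite J0"
    using \<open>J0 \<subseteq> J\<close> \<open>J \<subseteq> I\<close> by (blast intro: finite_subset[OF _ finite_players])
  moreover have "J0 \<noteq> {}"
    using exit by (simp add: is_exit_def)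
  ultimately have "0 < card J0"
    by (simp add: card_gt_0_iff)
  moreover have "\<not> 2 \<le> card J0"
    using exit \<open>joint_exits I A p x = {}\<close> unfolding joint_exits_def by blast
  ultimately have "card J0 = 1"
    by linarith
  then obtain j where "J0 = {j}"
    by (rule card_1_singletonE)
  moreover have "pure_upd x {j} (restrict a {j}) = pure_upd x {j} (\<lambda>_. a j)"
    by (auto simp: pure_upd_def fun_eq_iff)
  ultimately show ?thesis
    using that \<open>J0 \<subseteq> J\<close> exit by (auto simp: is_exit_def)
qed

lemma exit_actions_subset_of_no_joint_exits:
  assumes x: "\<And>j c. j \<in> I \<Longrightarrow> c \<in> A j \<Longrightarrow> 0 \<le> x j c" "pval I A p x = 0" "joint_exits I A p x = {}"
    and y: "\<And>j c. j \<in> I \<Longrightarrow> c \<in> A j \<Longrightarrow> 0 \<le> y j c" "pval I A p y = 0"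
    and persist: "\<And>j c. j \<in> I \<Longrightarrow> c \<in> A j \<Longrightarrow>
      0 < pval I A p (pure_upd x {j} (\<lambda>_. c)) \<Longrightarrow> 0 < pval I A p (pure_upd y {j} (\<lambda>_. c))"
    and "i \<in> I"
  shows "exit_actions I A p i y \<subseteq> exit_actions I A p i x"
proof
  fix b assume "b \<in> exit_actions I A p i y"
  then have "0 < pval I A p (pure_upd y {i} (\<lambda>_. b))"
    by (simp add: exit_actions_def)
  with y(1) have "\<exists>a \<in> PiE I A. 0 < p a \<and> (\<forall>j \<in> I. if j \<in> {i} then a j = b else 0 < y j (a j))"
    by (rule pval_pure_upd_pos_iff[THEN iffD1])
  then obtain a where a: "a \<in> PiE I A" "0 < p a"
    and a_upd: "\<forall>j \<in> I. if j \<in> {i} then a j = b else 0 < y j (a j)"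
    by blast
  then have "a i = b" and a_pos: "\<forall>j \<in> I - {i}. 0 < y j (a j)"
    using \<open>i \<in> I\<close> by auto
  define J where "J = insert i {j \<in> I. x j (a j) = 0}"
  have "J \<subseteq> I"
    using \<open>i \<in> I\<close> by (auto simp: J_def)
  have "\<forall>j \<in> I - J. 0 < x j (a j)"
    using a(1) x(1) by (force simp: J_def order_less_le)
  then have "\<exists>a' \<in> PiE I A. 0 < p a' \<and> (\<forall>j \<in> I. if j \<in> J then a' j = a j else 0 < x j (a' j))"
    using a by auto
  with x(1) have "0 < pval I A p (pure_upd x J a)"
    by (rule pval_pure_upd_pos_iff[THEN iffD2])
  then obtain j where "j \<in> J" and exit_j: "0 < pval I A p (pure_upd x {j} (\<lambda>_. a j))"
    using exists_unilateral_exit_below x \<open>J \<subseteq> I\<close> a(1) by blast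
  show "b \<in> exit_actions I A p i x"
  proof (cases "j = i")
    case True
    then show ?thesis
      using exit_j \<open>a i = b\<close> a(1) \<open>i \<in> I\<close> by (auto simp: exit_actions_def)
  next
    case False
    have "j \<in> I"
      using \<open>j \<in> J\<close> \<open>J \<subseteq> I\<close> by blast
    moreover have "a j \<in> A j"
      using a(1) \<open>j \<in> I\<close> by (rule PiE_mem)
    ultimately have "0 < pval I A p (pure_upd y {j} (\<lambda>_. a j))"
      using exit_j by (rule persist)
    moreover have "0 < y j (a j)"
      using a_pos \<open>j \<in> I\<close> False by blast
    ultimately have "0 < pval I A p y"
      using pval_pos_of_pure_upd_pos y(1) by blast
    with y(2) show ?thesis by simp
  qed
qed

lemma eventually_exit_actions_eq:
  assumes "x \<in> nonabs I A p" and "joint_exits I A p x = {}" and "\<And>k. xs k \<in> nonabs I A p"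
    and conv: "\<And>j c. j \<in> I \<Longrightarrow> c \<in> A j \<Longrightarrow> ((\<lambda>k. xs k j c) \<longlongrightarrow> x j c) F"
    and "i \<in> I"
  shows "\<forall>\<^sub>F k in F. exit_actions I A p i (xs k) = exit_actions I A p i x"
proof -
  have persist_eventually: "\<forall>\<^sub>F k in F.
      0 < pval I A p (pure_upd x {j} (\<lambda>_. c)) \<longrightarrow> 0 < pval I A p (pure_upd (xs k) {j} (\<lambda>_. c))"
    for j c
  proof (cases "0 < pval I A p (pure_upd x {j} (\<lambda>_. c))")
    case True
    with conv have "\<forall>\<^sub>F k in F. 0 < pval I A p (pure_upd (xs k) {j} (\<lambda>_. c))"
      by (rule eventually_pval_pure_upd_pos)
    then show ?thesis
      by (rule eventually_mono) simp
  qed simp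
  have "\<forall>\<^sub>F k in F. \<forall>j \<in> I. \<forall>c \<in> A j.
      0 < pval I A p (pure_upd x {j} (\<lambda>_. c)) \<longrightarrow> 0 < pval I A p (pure_upd (xs k) {j} (\<lambda>_. c))"
    by (intro eventually_ball_finite ballI finite_players finite_actions persist_eventually)
  then show ?thesis
  proof (rule eventually_mono)
    fix k
    assume "\<forall>j \<in> I. \<forall>c \<in> A j.
      0 < pval I A p (pure_upd x {j} (\<lambda>_. c)) \<longrightarrow> 0 < pval I A p (pure_upd (xs k) {j} (\<lambda>_. c))"
    then have persist: "\<And>j c. j \<in> I \<Longrightarrow> c \<in> A j \<Longrightarrow>
      0 < pval I A p (pure_upd x {j} (\<lambda>_. c)) \<Longrightarrow> 0 < pval I A p (pure_upd (xs k) {j} (\<lambda>_. c))"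
      by blast
    have x_nonneg: "0 \<le> x j c" and xs_nonneg: "0 \<le> xs k j c" if "j \<in> I" "c \<in> A j" for j c
      using that assms(1,3) by (blast intro: nonabs_nonneg)+
    have "pval I A p x = 0" and "pval I A p (xs k) = 0"
      using assms(1,3) by (simp_all add: nonabs_def)
    with x_nonneg xs_nonneg \<open>joint_exits I A p x = {}\<close> persist \<open>i \<in> I\<close>
    have "exit_actions I A p i (xs k) \<subseteq> exit_actions I A p i x"
      by (intro exit_actions_subset_of_no_joint_exits)
    moreover have "exit_actions I A p i x \<subseteq> exit_actions I A p i (xs k)"
      using persist \<open>i \<in> I\<close> by (auto simp: exit_actions_def)
    ultimately show "exit_actions I A p i (xs k) = exit_actions I A p i x" by blast
  qed
qed

end

theorem mainTheorem7:
  fixes I :: "'i set" and A :: "'i \<Rightarrow> 'a set"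
    and r :: "'i \<Rightarrow> ('i \<Rightarrow> 'a) \<Rightarrow> real" and p :: "('i \<Rightarrow> 'a) \<Rightarrow> real"
    and x :: "'i \<Rightarrow> 'a \<Rightarrow> real" and xs :: "nat \<Rightarrow> 'i \<Rightarrow> 'a \<Rightarrow> real"
  assumes finI: "finite I"
    and finA: "\<And>i. i \<in> I \<Longrightarrow> finite (A i)"
    and neA: "\<And>i. i \<in> I \<Longrightarrow> A i \<noteq> {}"
    and r_range: "\<And>i a. i \<in> I \<Longrightarrow> a \<in> PiE I A \<Longrightarrow> 0 < r i a \<and> r i a \<le> 1"
    and p_range: "\<And>a. a \<in> PiE I A \<Longrightarrow> 0 \<le> p a \<and> p a \<le> 1"
    and xX: "x \<in> nonabs I A p"
    and noJ: "joint_exits I A p x = {}"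
    and xsX: "\<And>k. xs k \<in> nonabs I A p"
    and conv: "\<And>i b. i \<in> I \<Longrightarrow> b \<in> A i \<Longrightarrow> (\<lambda>k. xs k i b) \<longlonglongrightarrow> x i b"
    and iI: "i \<in> I"
  shows "(rho I A p r i x = -\<infinity> \<longrightarrow> (\<forall>\<^sub>F k in sequentially. rho I A p r i (xs k) = -\<infinity>))
       \<and> ((\<lambda>k. rho I A p r i (xs k)) \<longlonglongrightarrow> rho I A p r i x)"
proof -
  interpret finite_game I A p
    using finI finA p_range by unfold_locales auto
  let ?B = "exit_actions I A p i x"
  have B_eq: "\<forall>\<^sub>F k in sequentially. exit_actions I A p i (xs k) = ?B"
    using xX noJ xsX conv iI by (rule eventually_exit_actions_eq)
  have "(\<lambda>k. rval I A p r i (pure_upd (xs k) {i} (\<lambda>_. b))) \<longlonglongrightarrow> rval I A p r i (pure_upd x {i} (\<lambda>_. b))"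
    if "b \<in> ?B" for b
  proof -
    have "0 < pval I A p (pure_upd x {i} (\<lambda>_. b))"
      using that by (simp add: exit_actions_def)
    with conv show ?thesis
      by (rule rval_pure_upd_tendsto)
  qed
  then have "(\<lambda>k. SUP b\<in>?B. ereal (rval I A p r i (pure_upd (xs k) {i} (\<lambda>_. b))))
      \<longlonglongrightarrow> (SUP b\<in>?B. ereal (rval I A p r i (pure_upd x {i} (\<lambda>_. b))))"
    using finA[OF iI] by (intro tendsto_SUP_finite tendsto_ereal) (simp_all add: exit_actions_def)
  then have "(\<lambda>k. rho I A p r i (xs k)) \<longlonglongrightarrow> rho I A p r i x"
    unfolding rho_eq_SUP_exit_actions
    by (rule Lim_transform_eventually) (use B_eq in \<open>auto elim: eventually_mono\<close>)
  moreover have "\<forall>\<^sub>F k in sequentially. rho I A p r i (xs k) = -\<infinity>" if "rho I A p r i x = -\<infinity>"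
    using B_eq that by (auto simp: rho_eq_MInfty_iff elim: eventually_mono)
  ultimately show ?thesis by blast
qed

end
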